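(* For every $t_*>0$ there exist constants $\alpha>0$, $\delta_L>0$ such that every solution $f$ of $\partial_t f+v\cdot\nabla_x f=\big(\int_{\mathbb{R}^d}f(t,x,u)\,\mathrm{d}u\big)\mathcal{M}(v)-f$ on $\mathbb{T}^d\times\mathbb{R}^d$ with initial datum $f_0\in\mathcal{P}(\mathbb{T}^d\times\mathbb{R}^d)$ satisfies \[f(t_*,x,v)\ge\alpha\,\mathbb{1}_{\{|v|\le\delta_L\}}\] in the sense of measures on $\mathbb{T}^d\times\mathbb{R}^d$.
   Context: $\mathbb{T}^d$ is the unit flat torus, $\mathcal{M}(v)=(2\pi)^{-d/2}e^{-|v|^2/2}$, solutions are measure-valued solutions given by the associated Markov semigroup, and the right-hand side $\alpha\mathbb{1}_{\{|v|\le\delta_L\}}$ denotes $\alpha$ times Lebesgue measure on $\mathbb{T}^d\times\{|v|\le\delta_L\}$. *)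

theory Defs
  imports "HOL-Probability.Probability"
begin

text \<open>The unit flat torus T^d is represented by the fundamental domain [0,1)^d,
  with wrap-around map given by taking fractional parts componentwise.\<close>

definition torus :: "(real^'d) set" where
  "torus = {x. \<forall>i. 0 \<le> x $ i \<and> x $ i < 1}"

definition wrap :: "real^'d \<Rightarrow> real^'d" where
  "wrap x = (\<chi> i. frac (x $ i))"

definition flow :: "real \<Rightarrow> ((real^'d) \<times> (real^'d)) \<Rightarrow> ((real^'d) \<times> (real^'d))" where
  "flow t z = (wrap (fst z + t *\<^sub>R snd z), snd z)"

definition maxwellian :: "real^'d \<Rightarrow> real" where
  "maxwellian v = (2 * pi) powr (- real CARD('d) / 2) * exp (- (norm v)\<^sup>2 / 2)"

text \<open>Measure-valued (mild / Duhamel) solution of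
  d_t f + v . grad_x f = (int f du) M(v) - f  on T^d x R^d,
  i.e. f_t = e^{-t} (S_t)_# f_0 + int_0^t e^{-(t-s)} (S_{t-s})_# (rho_s (x) M) ds,
  where S is the free transport flow and rho_s the x-marginal of f_s.
  This is the solution given by the associated Markov semigroup.\<close>
definition kinetic_solution :: "(real \<Rightarrow> ((real^'d) \<times> (real^'d)) measure) \<Rightarrow> bool" where
  "kinetic_solution f \<longleftrightarrow>
     (\<forall>t\<ge>0. sets (f t) = sets borel \<and> prob_space (f t)) \<and>
     emeasure (f 0) (- (torus \<times> UNIV)) = 0 \<and>
     (\<forall>t\<ge>0. \<forall>A\<in>sets borel.
        emeasure (f t) A =
          ennreal (exp (- t)) * emeasure (f 0) (flow t -` A)
          + (\<integral>\<^sup>+ s\<in>{0..t}. ennreal (exp (- (t - s))) *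
               (\<integral>\<^sup>+ z. (\<integral>\<^sup>+ v. ennreal (maxwellian v) *
                   indicator A (flow (t - s) (fst z, v)) \<partial>lborel) \<partial>(f s)) \<partial>lborel))"

end

theory Submission
  imports Defs
begin

text \<open>Dropping the free-transport term of the Duhamel formula, f_t dominates its gain term
  \<integral>_0^t e^-(t-s) (S_(t-s))_# (\<rho>_s \<otimes> M) ds, where \<rho>_s is the x-marginal of f_s.
  Applied to cylinders over x, the gain term shows that for s \<in> [t/2, t] the marginal \<rho>_s dominates
  a multiple of Lebesgue measure on a ball Q, wrapped onto the torus: transported with a Maxwellian
  velocity for a time between t/4 and t, every position spreads over Q with density bounded below,
  uniformly in the starting point. Inserting this bound into the gain term once more, the lower
  bound of M on {|v| \<le> 1}, Fubini and translation invariance of Lebesgue measure give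
  f_t \<ge> \<alpha> Leb on torus \<times> {|v| \<le> 1}. Wrapping a ball instead of integrating over the torus
  itself avoids having to prove translation invariance of the measure on the torus.\<close>

lemma wrap_nth [simp]: "wrap x $ i = frac (x $ i)"
  by (simp add: wrap_def)

lemma wrap_in_torus: "wrap x \<in> torus"
  by (simp add: torus_def frac_lt_1)

lemma wrap_eq_self: "x \<in> torus \<Longrightarrow> wrap x = x"
  by (simp add: torus_def frac_eq vec_eq_iff)

lemma frac_frac_add: "frac (frac a + b) = frac (a + b)"
proof -
  have "frac a + b = (a + b) + of_int (- \<lfloor>a\<rfloor>)"
    by (simp add: frac_def)
  then show ?thesis
    by (metis frac_add_of_int_right)
qed

lemma wrap_wrap_add: "wrap (wrap x + y) = wrap (x + y)"
  by (simp add: wrap_def frac_frac_add)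

lemma norm_le_card_of_torus:
  fixes x :: "real^'d"
  assumes "x \<in> torus"
  shows "norm x \<le> real CARD('d)"
proof -
  have "(\<Sum>i\<in>UNIV. \<bar>x $ i\<bar>) \<le> (\<Sum>i\<in>(UNIV::'d set). 1)"
    using assms by (intro sum_mono) (auto simp: torus_def less_imp_le)
  then show ?thesis
    using norm_le_l1_cart[of x] by simp
qed

lemma borel_measurable_frac [measurable]: "(frac :: real \<Rightarrow> real) \<in> borel_measurable borel"
  unfolding frac_def by measurable

lemma borel_measurable_wrap [measurable]: "(wrap :: real^'d \<Rightarrow> real^'d) \<in> borel_measurable borel"
proof (subst borel_measurable_euclidean_space, intro ballI)
  fix b :: "real^'d"
  assume "b \<in> Basis"
  then obtain i where "b = axis i 1"
    by (auto simp: Basis_vec_def)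
  then show "(\<lambda>x. wrap x \<bullet> b) \<in> borel_measurable borel"
    by (simp add: cart_eq_inner_axis[symmetric])
qed

lemma borel_measurable_fst [measurable]:
  "(fst :: 'a::second_countable_topology \<times> 'b::second_countable_topology \<Rightarrow> 'a) \<in> borel_measurable borel"
  by (simp add: borel_prod[symmetric])

lemma borel_measurable_snd [measurable]:
  "(snd :: 'a::second_countable_topology \<times> 'b::second_countable_topology \<Rightarrow> 'b) \<in> borel_measurable borel"
  by (simp add: borel_prod[symmetric])

lemma sets_torus [measurable]: "(torus :: (real^'d) set) \<in> sets borel"
  unfolding torus_def by measurable

lemma borel_measurable_flow [measurable]: "flow t \<in> borel_measurable borel"
proof -
  have [measurable]: "(\<lambda>z::(real^'d) \<times> (real^'d). fst z + t *\<^sub>R snd z) \<in> borel_measurable borel"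
    by (intro borel_measurable_continuous_onI continuous_intros)
  show ?thesis
    unfolding flow_def by measurable
qed

lemma borel_measurable_maxwellian [measurable]: "maxwellian \<in> borel_measurable borel"
  unfolding maxwellian_def by measurable

lemma maxwellian_pos: "maxwellian v > 0"
  by (simp add: maxwellian_def)

lemma maxwellian_ge:
  fixes v :: "real^'d"
  assumes "norm v \<le> R"
  shows "maxwellian (0::real^'d) * exp (- R\<^sup>2 / 2) \<le> maxwellian v"
proof -
  have "(norm v)\<^sup>2 \<le> R\<^sup>2"
    using assms by (intro power_mono) auto
  then show ?thesis
    by (simp add: maxwellian_def)
qed

lemma nn_integral_lborel_affine:
  fixes g :: "'a::euclidean_space \<Rightarrow> ennreal"
  assumes [measurable]: "g \<in> borel_measurable borel" and "c > 0"
  shows "(\<integral>\<^sup>+u. g u \<partial>lborel) = ennreal (c ^ DIM('a)) * (\<integral>\<^sup>+v. g (a + c *\<^sub>R v) \<partial>lborel)"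
  using assms
  by (subst lborel_affine[of c a]) (simp_all add: nn_integral_density nn_integral_distr nn_integral_cmult)

lemma nn_integral_maxwellian_wrap_ge:
  fixes x :: "real^'d" and g :: "real^'d \<Rightarrow> ennreal"
  assumes [measurable]: "g \<in> borel_measurable borel"
    and "\<sigma> > 0" and "real CARD('d) + r \<le> \<sigma> * R"
  shows "ennreal (maxwellian (0::real^'d) * exp (- R\<^sup>2 / 2) / \<sigma> ^ CARD('d)) *
      (\<integral>\<^sup>+u. indicator (cball 0 r) u * g (wrap u) \<partial>lborel)
    \<le> (\<integral>\<^sup>+v. ennreal (maxwellian v) * g (wrap (x + \<sigma> *\<^sub>R v)) \<partial>lborel)"
proof -
  define m where "m = maxwellian (0::real^'d) * exp (- R\<^sup>2 / 2)"
  define G where "G u = indicator (cball 0 r) u * g (wrap u)" for u :: "real^'d"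
  have [measurable]: "cball (0::real^'d) r \<in> sets borel"
    by (simp add: borel_closed)
  have [measurable]: "G \<in> borel_measurable borel"
    unfolding G_def by measurable
  have "m \<ge> 0"
    using maxwellian_pos[of "0::real^'d"] by (simp add: m_def)
  have "ennreal (m / \<sigma> ^ CARD('d)) * (\<integral>\<^sup>+u. G u \<partial>lborel)
      = ennreal (m / \<sigma> ^ CARD('d)) * ennreal (\<sigma> ^ CARD('d)) * (\<integral>\<^sup>+v. G (wrap x + \<sigma> *\<^sub>R v) \<partial>lborel)"
    using \<open>\<sigma> > 0\<close> by (simp add: nn_integral_lborel_affine[of G \<sigma> "wrap x"] mult.assoc)
  also have "\<dots> = (\<integral>\<^sup>+v. ennreal m * G (wrap x + \<sigma> *\<^sub>R v) \<partial>lborel)"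
    using \<open>\<sigma> > 0\<close> \<open>m \<ge> 0\<close> by (simp add: ennreal_mult[symmetric] nn_integral_cmult)
  also have "\<dots> \<le> (\<integral>\<^sup>+v. ennreal (maxwellian v) * g (wrap (x + \<sigma> *\<^sub>R v)) \<partial>lborel)"
  proof (rule nn_integral_mono)
    fix v :: "real^'d"
    show "ennreal m * G (wrap x + \<sigma> *\<^sub>R v) \<le> ennreal (maxwellian v) * g (wrap (x + \<sigma> *\<^sub>R v))"
    proof (cases "wrap x + \<sigma> *\<^sub>R v \<in> cball 0 r")
      case True
      have "\<sigma> * norm v \<le> norm (wrap x + \<sigma> *\<^sub>R v) + norm (wrap x)"
        using norm_triangle_ineq4[of "wrap x + \<sigma> *\<^sub>R v" "wrap x"] \<open>\<sigma> > 0\<close> by simp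
      also have "\<dots> \<le> \<sigma> * R"
        using True norm_le_card_of_torus[OF wrap_in_torus[of x]] assms(3) by simp
      finally have "m \<le> maxwellian v"
        unfolding m_def using \<open>\<sigma> > 0\<close> by (intro maxwellian_ge) simp
      then show ?thesis
        using True by (simp add: G_def wrap_wrap_add ennreal_leI mult_right_mono)
    qed (simp add: G_def)
  qed
  finally show ?thesis
    by (simp add: G_def m_def)
qed

definition maxwellian_transport :: "real \<Rightarrow> ((real^'d) \<times> (real^'d)) set \<Rightarrow> real^'d \<Rightarrow> ennreal" where
  "maxwellian_transport \<tau> A x = (\<integral>\<^sup>+v. ennreal (maxwellian v) * indicator A (flow \<tau> (x, v)) \<partial>lborel)"

lemma borel_measurable_maxwellian_transport [measurable]:
  fixes A :: "((real^'d) \<times> (real^'d)) set"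
  assumes [measurable]: "A \<in> sets borel"
  shows "maxwellian_transport \<tau> A \<in> borel_measurable borel"
proof -
  have "case_prod (\<lambda>x v. ennreal (maxwellian v) * indicator A (flow \<tau> (x, v)))
      \<in> borel_measurable (lborel \<Otimes>\<^sub>M (lborel :: (real^'d) measure))"
    unfolding lborel_prod split_beta' by measurable
  from lborel.borel_measurable_nn_integral[OF this] show ?thesis
    by (simp add: maxwellian_transport_def[abs_def])
qed

lemma
  fixes f :: "real \<Rightarrow> ((real^'d) \<times> (real^'d)) measure"
  assumes "kinetic_solution f" and "0 \<le> t"
  shows sets_kinetic_solution: "sets (f t) = sets borel"
    and prob_space_kinetic_solution: "prob_space (f t)"
  using assms unfolding kinetic_solution_def by auto

lemma kinetic_solution_duhamel:
  fixes f :: "real \<Rightarrow> ((real^'d) \<times> (real^'d)) measure"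
  assumes "kinetic_solution f" and "0 \<le> t" and "A \<in> sets borel"
  shows "emeasure (f t) A = ennreal (exp (- t)) * emeasure (f 0) (flow t -` A)
    + (\<integral>\<^sup>+s\<in>{0..t}. ennreal (exp (- (t - s))) *
         (\<integral>\<^sup>+z. maxwellian_transport (t - s) A (fst z) \<partial>f s) \<partial>lborel)"
  using assms unfolding kinetic_solution_def maxwellian_transport_def by blast

lemma kinetic_solution_ge_of_transport_ge:
  fixes f :: "real \<Rightarrow> ((real^'d) \<times> (real^'d)) measure"
  assumes f: "kinetic_solution f" and A: "A \<in> sets borel" and "0 \<le> a" "a \<le> b" "b \<le> t"
    and transport_ge: "\<And>s. a \<le> s \<Longrightarrow> s \<le> b \<Longrightarrow> c \<le> (\<integral>\<^sup>+z. maxwellian_transport (t - s) A (fst z) \<partial>f s)"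
  shows "ennreal (exp (- t) * (b - a)) * c \<le> emeasure (f t) A"
proof -
  have "0 \<le> t"
    using assms(3-5) by simp
  have "(\<integral>\<^sup>+s. ennreal (exp (- t)) * c * indicator {a..b} s \<partial>lborel) = ennreal (exp (- t)) * c * ennreal (b - a)"
    using \<open>a \<le> b\<close> by (subst nn_integral_cmult_indicator) simp_all
  then have "ennreal (exp (- t) * (b - a)) * c = (\<integral>\<^sup>+s. ennreal (exp (- t)) * c * indicator {a..b} s \<partial>lborel)"
    using \<open>a \<le> b\<close> by (simp add: ennreal_mult mult_ac)
  also have "\<dots> \<le> (\<integral>\<^sup>+s\<in>{0..t}. ennreal (exp (- (t - s))) *
      (\<integral>\<^sup>+z. maxwellian_transport (t - s) A (fst z) \<partial>f s) \<partial>lborel)"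
  proof (rule nn_integral_mono)
    fix s
    show "ennreal (exp (- t)) * c * indicator {a..b} s \<le> ennreal (exp (- (t - s))) *
      (\<integral>\<^sup>+z. maxwellian_transport (t - s) A (fst z) \<partial>f s) * indicator {0..t} s"
    proof (cases "a \<le> s \<and> s \<le> b")
      case True
      then have "ennreal (exp (- t)) \<le> ennreal (exp (- (t - s)))"
        using \<open>0 \<le> a\<close> by (intro ennreal_leI) simp
      then show ?thesis
        using True transport_ge[of s] assms(3-5) by (simp add: mult_mono)
    qed simp
  qed
  also have "\<dots> \<le> emeasure (f t) A"
    unfolding kinetic_solution_duhamel[OF f \<open>0 \<le> t\<close> A] by (intro add_increasing) simp_all
  finally show ?thesis .
qed

lemma nn_integral_pushforward_mono:
  assumes \<phi>: "\<phi> \<in> M \<rightarrow>\<^sub>M N" and \<psi>: "\<psi> \<in> M' \<rightarrow>\<^sub>M N" and h: "h \<in> borel_measurable N"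
    and le: "\<And>C. C \<in> sets N \<Longrightarrow> emeasure M (\<phi> -` C \<inter> space M) \<le> emeasure M' (\<psi> -` C \<inter> space M')"
  shows "(\<integral>\<^sup>+x. h (\<phi> x) \<partial>M) \<le> (\<integral>\<^sup>+y. h (\<psi> y) \<partial>M')"
proof -
  have "distr M N \<phi> \<le> distr M' N \<psi>"
    using le by (subst le_measure) (simp_all add: emeasure_distr \<phi> \<psi>)
  then have "integral\<^sup>N (distr M N \<phi>) h \<le> integral\<^sup>N (distr M' N \<psi>) h"
    by (intro nn_integral_mono_measure) simp_all
  then show ?thesis
    by (simp add: nn_integral_distr \<phi> \<psi> h)
qed

lemma maxwellian_transport_cylinder_ge:
  fixes C :: "(real^'d) set"
  assumes [measurable]: "C \<in> sets borel"
    and "0 < \<sigma>" "\<sigma> \<le> T" and "real CARD('d) + r \<le> \<sigma> * R"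
  shows "ennreal (maxwellian (0::real^'d) * exp (- R\<^sup>2 / 2) / T ^ CARD('d)) *
      (\<integral>\<^sup>+u. indicator (cball 0 r) u * indicator C (wrap u) \<partial>lborel)
    \<le> maxwellian_transport \<sigma> (fst -` C) x"
proof -
  let ?m = "maxwellian (0::real^'d) * exp (- R\<^sup>2 / 2)"
  let ?L = "\<integral>\<^sup>+u. indicator (cball 0 r) u * indicator C (wrap u) \<partial>lborel"
  have "?m / T ^ CARD('d) \<le> ?m / \<sigma> ^ CARD('d)"
    using assms(2,3) maxwellian_pos[of "0::real^'d"]
    by (intro divide_left_mono power_mono mult_pos_pos) auto
  then have "ennreal (?m / T ^ CARD('d)) * ?L \<le> ennreal (?m / \<sigma> ^ CARD('d)) * ?L"
    by (intro mult_right_mono ennreal_leI) simp_all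
  also have "\<dots> \<le> (\<integral>\<^sup>+v. ennreal (maxwellian v) * indicator C (wrap (x + \<sigma> *\<^sub>R v)) \<partial>lborel)"
    using assms by (intro nn_integral_maxwellian_wrap_ge) simp_all
  also have "\<dots> = maxwellian_transport \<sigma> (fst -` C) x"
    by (simp add: maxwellian_transport_def flow_def indicator_def)
  finally show ?thesis .
qed

lemma kinetic_solution_marginal_ge_sets:
  fixes t :: real
  assumes "t > 0"
  obtains c where "c > 0"
    and "\<And>(f :: real \<Rightarrow> ((real^'d) \<times> (real^'d)) measure) s C.
      kinetic_solution f \<Longrightarrow> t / 2 \<le> s \<Longrightarrow> s \<le> t \<Longrightarrow> C \<in> sets borel \<Longrightarrow>
      ennreal c * (\<integral>\<^sup>+u. indicator (cball 0 (real CARD('d) + t)) u * indicator C (wrap u) \<partial>lborel)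
        \<le> emeasure (f s) (fst -` C)"
proof -
  define n where "n = CARD('d)"
  define R where "R = (2 * real n + t) / (t / 4)"
  define m where "m = maxwellian (0::real^'d) * exp (- R\<^sup>2 / 2) / t ^ n"
  have "m > 0"
    using maxwellian_pos[of "0::real^'d"] \<open>t > 0\<close> by (simp add: m_def)
  moreover have "ennreal (exp (- t) * (t / 4) * m) *
      (\<integral>\<^sup>+u. indicator (cball 0 (real n + t)) u * indicator C (wrap u) \<partial>lborel)
        \<le> emeasure (f s) (fst -` C)"
    if f: "kinetic_solution f" and s: "t / 2 \<le> s" "s \<le> t" and C [measurable]: "C \<in> sets borel"
    for f :: "real \<Rightarrow> ((real^'d) \<times> (real^'d)) measure" and s C
  proof -
    define L where "L = (\<integral>\<^sup>+u. indicator (cball 0 (real n + t)) u * indicator C (wrap u) \<partial>lborel)"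
    txt \<open>Only the gain at times r \<le> t/4 is used: the flight time s - r then lies in [t/4, t], so
      the velocities that carry a point of the torus into the ball stay bounded.\<close>
    have transport_ge: "ennreal m * L \<le> (\<integral>\<^sup>+z. maxwellian_transport (s - r) (fst -` C) (fst z) \<partial>f r)"
      if r: "0 \<le> r" "r \<le> t / 4" for r
    proof -
      have \<sigma>: "t / 4 \<le> s - r" "s - r \<le> t"
        using r s by auto
      have "real n + (real n + t) = t / 4 * R"
        using \<open>t > 0\<close> by (simp add: R_def)
      also have "\<dots> \<le> (s - r) * R"
        using \<sigma> \<open>t > 0\<close> by (intro mult_right_mono) (simp_all add: R_def)
      finally have R: "real n + (real n + t) \<le> (s - r) * R" .
      have "ennreal m * L \<le> maxwellian_transport (s - r) (fst -` C) x" for x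
        unfolding m_def L_def n_def using \<sigma> \<open>t > 0\<close> R
        by (intro maxwellian_transport_cylinder_ge) (simp_all add: n_def)
      then show ?thesis
        using r(1) by (intro prob_space.nn_integral_ge_const prob_space_kinetic_solution[OF f] AE_I2)
    qed
    have "ennreal (exp (- s) * (t / 4)) * (ennreal m * L) \<le> emeasure (f s) (fst -` C)"
      using kinetic_solution_ge_of_transport_ge[where a = 0 and b = "t / 4", OF f _ _ _ _ transport_ge]
        measurable_sets[OF borel_measurable_fst C] s \<open>t > 0\<close>
      by simp
    moreover have "ennreal (exp (- t) * (t / 4) * m) * L \<le> ennreal (exp (- s) * (t / 4)) * (ennreal m * L)"
    proof -
      have "ennreal (exp (- t) * (t / 4) * m) \<le> ennreal (exp (- s) * (t / 4) * m)"
        using s \<open>t > 0\<close> \<open>m > 0\<close> by (intro ennreal_leI mult_right_mono) auto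
      also have "\<dots> = ennreal (exp (- s) * (t / 4)) * ennreal m"
        using s \<open>t > 0\<close> \<open>m > 0\<close> by (intro ennreal_mult) auto
      finally show ?thesis
        by (metis mult.assoc mult_right_mono zero_le)
    qed
    ultimately show ?thesis
      unfolding L_def by simp
  qed
  ultimately show thesis
    using \<open>t > 0\<close> that[of "exp (- t) * (t / 4) * m"] by (simp add: n_def)
qed

lemma kinetic_solution_marginal_ge:
  fixes t :: real
  assumes "t > 0"
  obtains c where "c > 0"
    and "\<And>(f :: real \<Rightarrow> ((real^'d) \<times> (real^'d)) measure) s h.
      kinetic_solution f \<Longrightarrow> t / 2 \<le> s \<Longrightarrow> s \<le> t \<Longrightarrow> h \<in> borel_measurable borel \<Longrightarrow>
      ennreal c * (\<integral>\<^sup>+u. indicator (cball 0 (real CARD('d) + t)) u * h (wrap u) \<partial>lborel)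
        \<le> (\<integral>\<^sup>+z. h (fst z) \<partial>f s)"
proof -
  define Q where "Q = cball (0::real^'d) (real CARD('d) + t)"
  have [measurable]: "Q \<in> sets borel"
    by (simp add: Q_def borel_closed)
  obtain c where "c > 0" and marginal_ge_sets: "\<And>(f :: real \<Rightarrow> ((real^'d) \<times> (real^'d)) measure) s C.
      kinetic_solution f \<Longrightarrow> t / 2 \<le> s \<Longrightarrow> s \<le> t \<Longrightarrow> C \<in> sets borel \<Longrightarrow>
      ennreal c * (\<integral>\<^sup>+u. indicator Q u * indicator C (wrap u) \<partial>lborel) \<le> emeasure (f s) (fst -` C)"
    using kinetic_solution_marginal_ge_sets[OF assms] unfolding Q_def by blast
  moreover have "ennreal c * (\<integral>\<^sup>+u. indicator Q u * h (wrap u) \<partial>lborel) \<le> (\<integral>\<^sup>+z. h (fst z) \<partial>f s)"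
    if f: "kinetic_solution f" and s: "t / 2 \<le> s" "s \<le> t" and h [measurable]: "h \<in> borel_measurable borel"
    for f :: "real \<Rightarrow> ((real^'d) \<times> (real^'d)) measure" and s h
  proof -
    let ?M = "density lborel (\<lambda>u. ennreal c * indicator Q u)"
    have sets_f: "sets (f s) = sets borel"
      using s \<open>t > 0\<close> by (intro sets_kinetic_solution[OF f]) simp
    have "(\<integral>\<^sup>+u. h (wrap u) \<partial>?M) \<le> (\<integral>\<^sup>+z. h (fst z) \<partial>f s)"
    proof (rule nn_integral_pushforward_mono[where \<phi> = wrap and \<psi> = fst and h = h and N = borel])
      show "fst \<in> f s \<rightarrow>\<^sub>M borel"
        using borel_measurable_fst by (simp add: measurable_cong_sets[OF sets_f refl])
      fix C :: "(real^'d) set"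
      assume C [measurable]: "C \<in> sets borel"
      have "wrap -` C \<in> sets borel"
        using measurable_sets[OF borel_measurable_wrap C] by simp
      then have "emeasure ?M (wrap -` C \<inter> space ?M) = ennreal c * (\<integral>\<^sup>+u. indicator Q u * indicator C (wrap u) \<partial>lborel)"
        by (simp add: emeasure_density nn_integral_cmult mult.assoc indicator_vimage[symmetric])
      also have "\<dots> \<le> emeasure (f s) (fst -` C \<inter> space (f s))"
        using marginal_ge_sets[OF f s C] sets_eq_imp_space_eq[OF sets_f] by simp
      finally show "emeasure ?M (wrap -` C \<inter> space ?M) \<le> emeasure (f s) (fst -` C \<inter> space (f s))" .
    qed simp_all
    then show ?thesis
      by (simp add: nn_integral_density nn_integral_cmult mult.assoc)
  qed
  ultimately show thesis
    using that unfolding Q_def by blast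
qed

lemma lebesgue_le_nn_integral_maxwellian_transport:
  fixes A :: "((real^'d) \<times> (real^'d)) set"
  assumes [measurable]: "A \<in> sets borel" and "0 \<le> \<tau>" and "real CARD('d) + \<tau> \<le> r"
  shows "ennreal (maxwellian (0::real^'d) * exp (- 1 / 2)) * emeasure lborel (A \<inter> (torus \<times> cball 0 1))
    \<le> (\<integral>\<^sup>+u. indicator (cball 0 r) u * maxwellian_transport \<tau> A (wrap u) \<partial>lborel)"
proof -
  define m where "m = maxwellian (0::real^'d) * exp (- 1 / 2)"
  define B where "B = A \<inter> (torus \<times> cball (0::real^'d) 1)"
  define F where "F u v = indicator (cball 0 r) u * (ennreal (maxwellian v) * indicator A (flow \<tau> (wrap u, v)))"
    for u v :: "real^'d"
  have [measurable]: "cball (0::real^'d) r \<in> sets borel"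
    by (simp add: borel_closed)
  have "torus \<times> cball (0::real^'d) 1 \<in> sets borel"
    unfolding borel_prod[symmetric] by (intro pair_measureI) (simp_all add: borel_closed)
  then have B [measurable]: "B \<in> sets borel"
    unfolding B_def by (rule sets.Int[OF assms(1)])
  have [measurable]: "case_prod F \<in> borel_measurable (lborel \<Otimes>\<^sub>M lborel)"
    unfolding lborel_prod F_def split_beta' by measurable
  have "ennreal m * emeasure lborel B = (\<integral>\<^sup>+v. \<integral>\<^sup>+y. ennreal m * indicator B (y, v) \<partial>lborel \<partial>lborel)"
    by (subst lborel_pair.nn_integral_snd) (simp_all add: lborel_prod nn_integral_cmult_indicator)
  also have "\<dots> = (\<integral>\<^sup>+v. \<integral>\<^sup>+u. ennreal m * indicator B (\<tau> *\<^sub>R v + u, v) \<partial>lborel \<partial>lborel)"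
  proof (rule nn_integral_cong)
    fix v :: "real^'d"
    have "(\<lambda>y. ennreal m * indicator B (y, v)) \<in> borel_measurable borel"
      by measurable
    from nn_integral_lborel_affine[OF this, of 1 "\<tau> *\<^sub>R v"]
    show "(\<integral>\<^sup>+y. ennreal m * indicator B (y, v) \<partial>lborel)
        = (\<integral>\<^sup>+u. ennreal m * indicator B (\<tau> *\<^sub>R v + u, v) \<partial>lborel)"
      by simp
  qed
  also have "\<dots> \<le> (\<integral>\<^sup>+v. \<integral>\<^sup>+u. F u v \<partial>lborel \<partial>lborel)"
  proof (intro nn_integral_mono)
    fix u v :: "real^'d"
    show "ennreal m * indicator B (\<tau> *\<^sub>R v + u, v) \<le> F u v"
    proof (cases "(\<tau> *\<^sub>R v + u, v) \<in> B")
      case True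
      then have "(\<tau> *\<^sub>R v + u, v) \<in> A" and torus: "\<tau> *\<^sub>R v + u \<in> torus" and "norm v \<le> 1"
        by (auto simp: B_def)
      have "flow \<tau> (wrap u, v) = (\<tau> *\<^sub>R v + u, v)"
        using wrap_eq_self[OF torus] by (simp add: flow_def wrap_wrap_add add.commute)
      moreover have "norm u \<le> r"
      proof -
        have "norm u \<le> norm (\<tau> *\<^sub>R v + u) + \<tau> * norm v"
          using norm_triangle_ineq4[of "\<tau> *\<^sub>R v + u" "\<tau> *\<^sub>R v"] \<open>0 \<le> \<tau>\<close> by simp
        also have "\<dots> \<le> real CARD('d) + \<tau>"
          using norm_le_card_of_torus[OF torus] \<open>norm v \<le> 1\<close> \<open>0 \<le> \<tau>\<close>
          by (intro add_mono mult_left_le) simp_all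
        finally show ?thesis
          using assms(3) by simp
      qed
      moreover have "m \<le> maxwellian v"
        unfolding m_def using maxwellian_ge[OF \<open>norm v \<le> 1\<close>] by simp
      ultimately show ?thesis
        using True \<open>(\<tau> *\<^sub>R v + u, v) \<in> A\<close> by (simp add: F_def ennreal_leI)
    qed simp
  qed
  also have "\<dots> = (\<integral>\<^sup>+u. \<integral>\<^sup>+v. F u v \<partial>lborel \<partial>lborel)"
    by (rule lborel_pair.Fubini'[symmetric]) measurable
  also have "\<dots> = (\<integral>\<^sup>+u. indicator (cball 0 r) u * maxwellian_transport \<tau> A (wrap u) \<partial>lborel)"
    by (simp add: F_def maxwellian_transport_def nn_integral_cmult)
  finally show ?thesis
    by (simp add: m_def B_def)
qed

lemma kinetic_solution_transport_ge_lebesgue: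
  fixes t :: real
  assumes "t > 0"
  obtains c where "c > 0"
    and "\<And>(f :: real \<Rightarrow> ((real^'d) \<times> (real^'d)) measure) s A.
      kinetic_solution f \<Longrightarrow> t / 2 \<le> s \<Longrightarrow> s \<le> t \<Longrightarrow> A \<in> sets borel \<Longrightarrow>
      ennreal c * emeasure lborel (A \<inter> (torus \<times> cball 0 1))
        \<le> (\<integral>\<^sup>+z. maxwellian_transport (t - s) A (fst z) \<partial>f s)"
proof -
  obtain c where "c > 0" and marginal_ge: "\<And>(f :: real \<Rightarrow> ((real^'d) \<times> (real^'d)) measure) s h.
      kinetic_solution f \<Longrightarrow> t / 2 \<le> s \<Longrightarrow> s \<le> t \<Longrightarrow> h \<in> borel_measurable borel \<Longrightarrow>
      ennreal c * (\<integral>\<^sup>+u. indicator (cball 0 (real CARD('d) + t)) u * h (wrap u) \<partial>lborel)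
        \<le> (\<integral>\<^sup>+z. h (fst z) \<partial>f s)"
    using kinetic_solution_marginal_ge[OF assms] by blast
  define m where "m = maxwellian (0::real^'d) * exp (- 1 / 2)"
  have "m > 0"
    using maxwellian_pos[of "0::real^'d"] by (simp add: m_def)
  moreover have "ennreal (c * m) * emeasure lborel (A \<inter> (torus \<times> cball 0 1))
      \<le> (\<integral>\<^sup>+z. maxwellian_transport (t - s) A (fst z) \<partial>f s)"
    if f: "kinetic_solution f" and s: "t / 2 \<le> s" "s \<le> t" and A [measurable]: "A \<in> sets borel"
    for f :: "real \<Rightarrow> ((real^'d) \<times> (real^'d)) measure" and s A
  proof -
    have "ennreal (c * m) * emeasure lborel (A \<inter> (torus \<times> cball 0 1))
        = ennreal c * (ennreal m * emeasure lborel (A \<inter> (torus \<times> cball 0 1)))"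
      using \<open>c > 0\<close> \<open>m > 0\<close> by (simp add: ennreal_mult mult.assoc)
    also have "\<dots> \<le> ennreal c * (\<integral>\<^sup>+u. indicator (cball 0 (real CARD('d) + t)) u *
        maxwellian_transport (t - s) A (wrap u) \<partial>lborel)"
      unfolding m_def using s
      by (intro mult_left_mono lebesgue_le_nn_integral_maxwellian_transport) simp_all
    also have "\<dots> \<le> (\<integral>\<^sup>+z. maxwellian_transport (t - s) A (fst z) \<partial>f s)"
      using s by (intro marginal_ge[OF f]) simp_all
    finally show ?thesis .
  qed
  ultimately show thesis
    using \<open>c > 0\<close> that[of "c * m"] by simp
qed

theorem mainTheorem6:
  fixes t\<^sub>s :: real
  assumes "t\<^sub>s > 0"
  shows "\<exists>\<alpha>::real. \<exists>\<delta>::real. \<alpha> > 0 \<and> \<delta> > 0 \<and>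
    (\<forall>f :: real \<Rightarrow> ((real^'d) \<times> (real^'d)) measure. kinetic_solution f \<longrightarrow>
       (\<forall>A\<in>sets borel.
          ennreal \<alpha> * emeasure lborel (A \<inter> (torus \<times> cball 0 \<delta>)) \<le> emeasure (f t\<^sub>s) A))"
proof -
  obtain c where "c > 0" and transport_ge: "\<And>(f :: real \<Rightarrow> ((real^'d) \<times> (real^'d)) measure) s A.
      kinetic_solution f \<Longrightarrow> t\<^sub>s / 2 \<le> s \<Longrightarrow> s \<le> t\<^sub>s \<Longrightarrow> A \<in> sets borel \<Longrightarrow>
      ennreal c * emeasure lborel (A \<inter> (torus \<times> cball 0 1))
        \<le> (\<integral>\<^sup>+z. maxwellian_transport (t\<^sub>s - s) A (fst z) \<partial>f s)"
    using kinetic_solution_transport_ge_lebesgue[OF assms] by blast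
  define \<alpha> where "\<alpha> = exp (- t\<^sub>s) * (t\<^sub>s - t\<^sub>s / 2) * c"
  have "ennreal \<alpha> * emeasure lborel (A \<inter> (torus \<times> cball 0 1)) \<le> emeasure (f t\<^sub>s) A"
    if f: "kinetic_solution f" and A: "A \<in> sets borel"
    for f :: "real \<Rightarrow> ((real^'d) \<times> (real^'d)) measure" and A
  proof -
    have "ennreal (exp (- t\<^sub>s) * (t\<^sub>s - t\<^sub>s / 2)) * (ennreal c * emeasure lborel (A \<inter> (torus \<times> cball 0 1)))
        \<le> emeasure (f t\<^sub>s) A"
      using assms by (intro kinetic_solution_ge_of_transport_ge[OF f A] transport_ge[OF f _ _ A]) simp_all
    moreover have "ennreal \<alpha> = ennreal (exp (- t\<^sub>s) * (t\<^sub>s - t\<^sub>s / 2)) * ennreal c"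
      unfolding \<alpha>_def using assms \<open>c > 0\<close> by (intro ennreal_mult) auto
    ultimately show ?thesis
      by (simp add: mult.assoc)
  qed
  moreover have "\<alpha> > 0"
    using assms \<open>c > 0\<close> by (simp add: \<alpha>_def)
  ultimately show ?thesis
    by (intro exI[of _ \<alpha>] exI[of _ 1]) simp
qed

end
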